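(* Let $G=(V,E,w)$, the partition $SG_1,\dots,SG_m$, the object set $O$ with $|O|>k$, the query $q=(v_q,k)$, and the D$k$NN protocol be as described in the context, and assume $G$ is connected and every edge weight satisfies $w(u,v)\ge \|\mathrm{pos}(u)-\mathrm{pos}(v)\|_2$. Consider any execution of the protocol (with arbitrary interleaving and delays of message processing, and with arbitrarily stale local bounds subject to the constraint in the context). If at some time the acknowledgment buffer $\mathcal{B}_q$ is empty, then the returned set $R(q)$ (the $k$ reported objects with smallest reported distances, ties broken arbitrarily) satisfies: $|R(q)|=k$, $R(q)\subseteq O$, and for all $o\in R(q)$ and all $o'\in O\setminus R(q)$, $SD(v_q,o)\le SD(v_q,o')$.
   Context: Road network: $G=(V,E,w)$ is a finite undirected graph with non-negative edge weights $w$; each vertex $v$ has a planar position $\mathrm{pos}(v)\in\mathbb{R}^2$. $SD(u,v)$ denotes the shortest-path distance in $G$. The vertex set is partitioned into subgraphs $SG_1,\dots,SG_m$; each $SG_p$ is the induced subgraph on its vertex set, and $d_p(a,b)$ is the shortest-path distance between $a,b$ inside $SG_p$ (using only edges with both endpoints in $SG_p$). A vertex of $SG_p$ is a border vertex if it has a neighbor in some $SG_{p'}$, $p'\ne p$; such edges are external edges. Each moving object $o\in O$ has a live vertex $v(o)\in V$ (the next vertex it travels toward) and a remaining cost $\delta(o)\ge 0$; define $SD(v_q,o)=SD(v_q,v(o))+\delta(o)$. For the query $q=(v_q,k)$, let $E(v_q,SG_p)$ be the minimum Euclidean distance from $\mathrm{pos}(v_q)$ to the positions of the border vertices of $SG_p$.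 D$k$NN protocol. Each subgraph $SG_p$ keeps a table $D_p(\cdot)$ (initially $+\infty$) over its own vertices and the outside neighbors of its border vertices, and a local bound $\varepsilon_p$. A query unit collects reported pairs $(o,\text{dist})$, keeping for each object its minimum reported distance $\mathrm{rep}(o)$; the global bound $\varepsilon(t)$ at time $t$ is the $k$-th smallest value of $\mathrm{rep}$ over distinct objects reported so far ($+\infty$ if fewer than $k$). The query starts by sending the message $(v_q,0)$ to the subgraph containing $v_q$. When $SG_p$ processes a message $(v_b,\text{dist})$ with $v_b\in SG_p$: if $\text{dist}>\varepsilon_p$ or $\text{dist}>D_p(v_b)$, it does nothing further; otherwise it sets $D_p(v_b)=\text{dist}$; for each live vertex $v_i\in SG_p$ with $\text{dist}+d_p(v_b,v_i)\le D_p(v_i)$ it sets $D_p(v_i)=\text{dist}+d_p(v_b,v_i)$ and reports to the query unit every object $o$ with $v(o)=v_i$ and $D_p(v_i)+\delta(o)<\varepsilon_p$, with distance $D_p(v_i)+\delta(o)$; for each border vertex $v_j\in SG_p$ and each neighbor $v'\notin SG_p$ of $v_j$ with $\text{dist}+d_p(v_b,v_j)+w(v_j,v')\le D_p(v')$, it sets $D_p(v')$ to that value and sends the message $(v',D_p(v'))$ to the subgraph containing $v'$. Bounds: at every time $t$, each non-pruned subgraph uses a local bound $\varepsilon_p(t)\ge\varepsilon(t)$ (staleness allowed). Pruning: if at some time $t$ a subgraph $SG_p$ not containing $v_q$ satisfies $E(v_q,SG_p)>\varepsilon(t)$, it may be pruned, after which $\varepsilon_p=0$ (it discards all further messages). Acknowledgments: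 whenever a message is sent from $SG_p$ to $SG_{p'}$, a token is inserted into the buffer $\mathcal{B}_q$; the token is removed when $SG_{p'}$ has finished processing that message (including dispatching all messages it generates, whose tokens are inserted before removal). The initial message also carries a token. *)

theory Defs
  imports "HOL-Analysis.Analysis" "HOL-Library.Multiset"
begin

text \<open>Static data of one D-kNN query instance: the road network G = (V,E,w) with planar
positions, the partition into subgraphs (given by an index function part: vertex v
belongs to SG_(part v)), the moving objects O with live vertex and remaining cost,
and the query q = (v_q, k).\<close>

record ('v, 'p, 'o) dknn_inst =
  Vs    :: "'v set"
  Es    :: "('v \<times> 'v) set"
  wt    :: "'v \<Rightarrow> 'v \<Rightarrow> real"
  vpos  :: "'v \<Rightarrow> real^2"
  part  :: "'v \<Rightarrow> 'p"
  Obj   :: "'o set"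
  vloc  :: "'o \<Rightarrow> 'v"
  rem   :: "'o \<Rightarrow> real"
  vq    :: "'v"
  kq    :: nat

fun is_walk :: "('v \<times> 'v) set \<Rightarrow> 'v list \<Rightarrow> bool" where
  "is_walk E [] = False"
| "is_walk E [x] = True"
| "is_walk E (x # y # xs) = ((x, y) \<in> E \<and> is_walk E (y # xs))"

fun walk_len :: "('v \<Rightarrow> 'v \<Rightarrow> real) \<Rightarrow> 'v list \<Rightarrow> real" where
  "walk_len w (x # y # xs) = w x y + walk_len w (y # xs)"
| "walk_len w _ = 0"

definition sp_dist :: "('v \<times> 'v) set \<Rightarrow> ('v \<Rightarrow> 'v \<Rightarrow> real) \<Rightarrow> 'v set \<Rightarrow> 'v \<Rightarrow> 'v \<Rightarrow> ereal" where
  "sp_dist E w S a b =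
     Inf {ereal (walk_len w xs) | xs. is_walk E xs \<and> hd xs = a \<and> last xs = b \<and> set xs \<subseteq> S}"

definition SD :: "('v, 'p, 'o) dknn_inst \<Rightarrow> 'v \<Rightarrow> 'v \<Rightarrow> ereal" where
  "SD N a b = sp_dist (Es N) (wt N) (Vs N) a b"

definition SD_obj :: "('v, 'p, 'o) dknn_inst \<Rightarrow> 'o \<Rightarrow> ereal" where
  "SD_obj N ob = SD N (vq N) (vloc N ob) + ereal (rem N ob)"

definition SG :: "('v, 'p, 'o) dknn_inst \<Rightarrow> 'p \<Rightarrow> 'v set" where
  "SG N p = {v \<in> Vs N. part N v = p}"

definition dsub :: "('v, 'p, 'o) dknn_inst \<Rightarrow> 'p \<Rightarrow> 'v \<Rightarrow> 'v \<Rightarrow> ereal" where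
  "dsub N p a b = sp_dist (Es N) (wt N) (SG N p) a b"

definition is_border :: "('v, 'p, 'o) dknn_inst \<Rightarrow> 'p \<Rightarrow> 'v \<Rightarrow> bool" where
  "is_border N p v \<longleftrightarrow> v \<in> SG N p \<and> (\<exists>u. (v, u) \<in> Es N \<and> u \<in> Vs N \<and> part N u \<noteq> p)"

definition live_set :: "('v, 'p, 'o) dknn_inst \<Rightarrow> 'p \<Rightarrow> 'v set" where
  "live_set N p = {v \<in> SG N p. \<exists>ob \<in> Obj N. vloc N ob = v}"

definition ext_edges :: "('v, 'p, 'o) dknn_inst \<Rightarrow> 'p \<Rightarrow> ('v \<times> 'v) set" where
  "ext_edges N p = {(vj, v'). is_border N p vj \<and> (vj, v') \<in> Es N \<and> v' \<in> Vs N \<and> part N v' \<noteq> p}"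

definition Edist :: "('v, 'p, 'o) dknn_inst \<Rightarrow> 'p \<Rightarrow> ereal" where
  "Edist N p = Inf {ereal (norm (vpos N (vq N) - vpos N b)) | b. is_border N p b}"

text \<open>Dt p = the table D_p; leps p = local bound epsilon_p; pruned = pruned subgraphs;
reps = all pairs (ob, dist) reported to the query unit so far; inbox = messages
(target vertex, dist) that were sent and whose processing has not started (each carries a
token in the buffer B_q); active p = the message SG_p is currently processing (its token
is still in B_q) together with the live vertices and external edges not yet handled.\<close>

record ('v, 'p, 'o) dstate =
  Dt     :: "'p \<Rightarrow> 'v \<Rightarrow> ereal"
  leps   :: "'p \<Rightarrow> ereal"
  pruned :: "'p set"
  reps   :: "('o \<times> ereal) set"
  inbox  :: "('v \<times> ereal) multiset"
  active :: "'p \<Rightarrow> (('v \<times> ereal) \<times> 'v set \<times> ('v \<times> 'v) set) option"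

definition init_state :: "('v, 'p, 'o) dknn_inst \<Rightarrow> ('v, 'p, 'o) dstate" where
  "init_state N = \<lparr> Dt = (\<lambda>_ _. \<infinity>), leps = (\<lambda>_. \<infinity>), pruned = {}, reps = {},
                    inbox = {#(vq N, 0)#}, active = (\<lambda>_. None) \<rparr>"

definition rep_objs :: "('v, 'p, 'o) dstate \<Rightarrow> 'o set" where
  "rep_objs s = fst ` reps s"

definition rep :: "('v, 'p, 'o) dstate \<Rightarrow> 'o \<Rightarrow> ereal" where
  "rep s ob = Inf {d. (ob, d) \<in> reps s}"

definition geps :: "('v, 'p, 'o) dknn_inst \<Rightarrow> ('v, 'p, 'o) dstate \<Rightarrow> ereal" where
  "geps N s = (if card (rep_objs s) < kq N then \<infinity>
               else sorted_list_of_multiset (image_mset (rep s) (mset_set (rep_objs s))) ! (kq N - 1))"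

definition buffer_empty :: "('v, 'p, 'o) dstate \<Rightarrow> bool" where
  "buffer_empty s \<longleftrightarrow> inbox s = {#} \<and> (\<forall>p. active s p = None)"

text \<open>Each subgraph processes its messages one at a time, but the processing of a message is
split into fine-grained steps (one per live vertex / per external edge, in arbitrary order)
which interleave arbitrarily with the steps of other subgraphs, with message delivery order,
with (stale) updates of local bounds, and with pruning.\<close>

inductive dstep :: "('v, 'p, 'o) dknn_inst \<Rightarrow> ('v, 'p, 'o) dstate \<Rightarrow> ('v, 'p, 'o) dstate \<Rightarrow> bool"
  for N where
  discard:
  "\<lbrakk> (vb, d) \<in># inbox s; p = part N vb; active s p = None;
     p \<in> pruned s \<or> d > leps s p \<or> d > Dt s p vb \<rbrakk>
   \<Longrightarrow> dstep N s (s\<lparr> inbox := inbox s - {#(vb, d)#} \<rparr>)"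
| start:
  "\<lbrakk> (vb, d) \<in># inbox s; p = part N vb; active s p = None;
     p \<notin> pruned s; d \<le> leps s p; d \<le> Dt s p vb \<rbrakk>
   \<Longrightarrow> dstep N s (s\<lparr> inbox := inbox s - {#(vb, d)#},
                      Dt := (Dt s)(p := (Dt s p)(vb := d)),
                      active := (active s)(p := Some ((vb, d), live_set N p, ext_edges N p)) \<rparr>)"
| live_upd:
  "\<lbrakk> active s p = Some ((vb, d), L, B); vi \<in> L; c = d + dsub N p vb vi; c \<le> Dt s p vi \<rbrakk>
   \<Longrightarrow> dstep N s (s\<lparr> Dt := (Dt s)(p := (Dt s p)(vi := c)),
                      reps := reps s \<union> {(ob, c + ereal (rem N ob)) | ob.
                                ob \<in> Obj N \<and> vloc N ob = vi \<and> c + ereal (rem N ob) < leps s p},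
                      active := (active s)(p := Some ((vb, d), L - {vi}, B)) \<rparr>)"
| live_skip:
  "\<lbrakk> active s p = Some ((vb, d), L, B); vi \<in> L; \<not> d + dsub N p vb vi \<le> Dt s p vi \<rbrakk>
   \<Longrightarrow> dstep N s (s\<lparr> active := (active s)(p := Some ((vb, d), L - {vi}, B)) \<rparr>)"
| ext_upd:
  "\<lbrakk> active s p = Some ((vb, d), L, B); (vj, v') \<in> B;
     c = d + dsub N p vb vj + ereal (wt N vj v'); c \<le> Dt s p v' \<rbrakk>
   \<Longrightarrow> dstep N s (s\<lparr> Dt := (Dt s)(p := (Dt s p)(v' := c)),
                      inbox := inbox s + {#(v', c)#},
                      active := (active s)(p := Some ((vb, d), L, B - {(vj, v')})) \<rparr>)"
| ext_skip:
  "\<lbrakk> active s p = Some ((vb, d), L, B); (vj, v') \<in> B;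
     \<not> d + dsub N p vb vj + ereal (wt N vj v') \<le> Dt s p v' \<rbrakk>
   \<Longrightarrow> dstep N s (s\<lparr> active := (active s)(p := Some ((vb, d), L, B - {(vj, v')})) \<rparr>)"
| finish:
  "active s p = Some (m, {}, {}) \<Longrightarrow> dstep N s (s\<lparr> active := (active s)(p := None) \<rparr>)"
| bound:
  "\<lbrakk> p \<notin> pruned s; e \<ge> geps N s \<rbrakk> \<Longrightarrow> dstep N s (s\<lparr> leps := (leps s)(p := e) \<rparr>)"
| prune:
  "\<lbrakk> p \<noteq> part N (vq N); Edist N p > geps N s \<rbrakk>
   \<Longrightarrow> dstep N s (s\<lparr> pruned := insert p (pruned s), leps := (leps s)(p := 0) \<rparr>)"

definition reachable :: "('v, 'p, 'o) dknn_inst \<Rightarrow> ('v, 'p, 'o) dstate \<Rightarrow> bool" where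
  "reachable N s \<longleftrightarrow> (dstep N)\<^sup>*\<^sup>* (init_state N) s"

definition is_result :: "('v, 'p, 'o) dknn_inst \<Rightarrow> ('v, 'p, 'o) dstate \<Rightarrow> 'o set \<Rightarrow> bool" where
  "is_result N s R \<longleftrightarrow> R \<subseteq> rep_objs s \<and> card R = min (kq N) (card (rep_objs s))
      \<and> (\<forall>ob \<in> R. \<forall>o' \<in> rep_objs s - R. rep s ob \<le> rep s o')"

definition wf_inst :: "('v, 'p, 'o) dknn_inst \<Rightarrow> bool" where
  "wf_inst N \<longleftrightarrow>
     finite (Vs N) \<and> Es N \<subseteq> Vs N \<times> Vs N \<and>
     (\<forall>u v. (u, v) \<in> Es N \<longrightarrow> (v, u) \<in> Es N \<and> wt N u v = wt N v u \<and> wt N u v \<ge> 0) \<and>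
     finite (Obj N) \<and> (\<forall>ob \<in> Obj N. vloc N ob \<in> Vs N \<and> rem N ob \<ge> 0) \<and>
     vq N \<in> Vs N"

definition connected_graph :: "('v, 'p, 'o) dknn_inst \<Rightarrow> bool" where
  "connected_graph N \<longleftrightarrow> (\<forall>a \<in> Vs N. \<forall>b \<in> Vs N.
      \<exists>xs. is_walk (Es N) xs \<and> hd xs = a \<and> last xs = b \<and> set xs \<subseteq> Vs N)"

end

theory Submission
  imports Defs
begin

text \<open>
  Every reachable state satisfies an invariant, stated with a ghost record F of the messages
  whose processing by each subgraph has finished. Its soundness part says that messages, table
  entries and reports never underestimate shortest-path distances (triangle inequality). Its
  completeness part says that every table entry D_p(v) is covered: the subgraph of v is pruned,
  or D_p(v) is at least the global bound, or a started message of that subgraph reaches v within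
  D_p(v), or a message carrying it is still in transit; that finished messages have propagated
  to all external edges and live vertices; and that an object on a live vertex of an unpruned
  subgraph has been reported within its table distance unless the global bound is smaller.

  Once the buffer is empty, induction along a walk from v_q shows that every vertex v is
  reached by a finished message within the walk length, or the walk is at least as long as the
  global bound. A walk cannot enter a pruned subgraph cheaply, since its length dominates the
  Euclidean distance from v_q to the border of that subgraph, which exceeds the bound. Hence
  min(rep(o), eps) <= SD(v_q, o) <= rep(o) for every object o, and any k smallest reports are
  k nearest neighbours.
\<close>

section \<open>Walks and shortest-path distances\<close>

lemma ereal_le_Inf_add:
  fixes A :: "ereal set"
  assumes "\<And>a. a \<in> A \<Longrightarrow> 0 \<le> a" and "0 \<le> c" and "\<And>a. a \<in> A \<Longrightarrow> z \<le> a + c"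
  shows "z \<le> Inf A + c"
proof (cases "A = {}")
  case True
  then show ?thesis using assms(2) by (simp add: top_ereal_def)
next
  case False
  have "Inf A + c = (INF a\<in>A. a + c)"
    using INF_ereal_add_left[of A c "\<lambda>a. a"] False assms(1,2) by auto
  then show ?thesis using assms(3) by (auto intro: INF_greatest)
qed

lemma is_walk_snoc:
  "xs \<noteq> [] \<Longrightarrow> is_walk E (xs @ [y]) \<longleftrightarrow> is_walk E xs \<and> (last xs, y) \<in> E"
  by (induction xs rule: is_walk.induct) auto

lemma walk_len_snoc:
  "xs \<noteq> [] \<Longrightarrow> walk_len w (xs @ [y]) = walk_len w xs + w (last xs) y"
  by (induction w xs rule: walk_len.induct) auto

lemma is_walk_join:
  "is_walk E xs \<Longrightarrow> is_walk E ys \<Longrightarrow> last xs = hd ys \<Longrightarrow> is_walk E (xs @ tl ys)"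
  by (induction xs rule: is_walk.induct) (auto simp: neq_Nil_conv elim: is_walk.elims)

lemma walk_len_join:
  "is_walk E xs \<Longrightarrow> is_walk E ys \<Longrightarrow> last xs = hd ys \<Longrightarrow>
   walk_len w (xs @ tl ys) = walk_len w xs + walk_len w ys"
  by (induction w xs rule: walk_len.induct) (auto elim: is_walk.elims)

lemma last_append_tl: "xs \<noteq> [] \<Longrightarrow> ys \<noteq> [] \<Longrightarrow> last xs = hd ys \<Longrightarrow> last (xs @ tl ys) = last ys"
  by (cases ys) auto

lemma walk_len_nonneg:
  "is_walk E xs \<Longrightarrow> (\<And>u v. (u, v) \<in> E \<Longrightarrow> 0 \<le> w u v) \<Longrightarrow> 0 \<le> walk_len w xs"
  by (induction w xs rule: walk_len.induct) (auto elim: is_walk.elims)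

lemma norm_le_walk_len:
  fixes pos :: "'v \<Rightarrow> 'a::real_normed_vector"
  assumes "is_walk E xs" and "\<And>u v. (u, v) \<in> E \<Longrightarrow> norm (pos u - pos v) \<le> w u v"
  shows "norm (pos (hd xs) - pos (last xs)) \<le> walk_len w xs"
  using assms
proof (induction w xs rule: walk_len.induct)
  case (1 w x y xs)
  have "norm (pos x - pos (last (y # xs))) \<le> norm (pos x - pos y) + norm (pos y - pos (last (y # xs)))"
    by (rule norm_diff_triangle_le[OF order_refl order_refl])
  also have "\<dots> \<le> w x y + walk_len w (y # xs)"
    using 1 by (intro add_mono) auto
  finally show ?case by simp
qed auto

lemma sp_dist_le_walk_len:
  "is_walk E xs \<Longrightarrow> hd xs = a \<Longrightarrow> last xs = b \<Longrightarrow> set xs \<subseteq> S \<Longrightarrow>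
   sp_dist E w S a b \<le> ereal (walk_len w xs)"
  unfolding sp_dist_def by (rule Inf_lower) blast

lemma le_sp_dist_add:
  assumes nonneg: "\<And>u v. (u, v) \<in> E \<Longrightarrow> 0 \<le> w u v" and "0 \<le> c"
    and le: "\<And>xs. is_walk E xs \<Longrightarrow> hd xs = a \<Longrightarrow> last xs = b \<Longrightarrow> set xs \<subseteq> S \<Longrightarrow>
           z \<le> ereal (walk_len w xs) + c"
  shows "z \<le> sp_dist E w S a b + c"
  unfolding sp_dist_def
proof (rule ereal_le_Inf_add[OF _ \<open>0 \<le> c\<close>])
  fix x assume "x \<in> {ereal (walk_len w xs) |xs. is_walk E xs \<and> hd xs = a \<and> last xs = b \<and> set xs \<subseteq> S}"
  then obtain xs where "x = ereal (walk_len w xs)" "is_walk E xs" "hd xs = a" "last xs = b" "set xs \<subseteq> S"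
    by blast
  then show "0 \<le> x" "z \<le> x + c" using walk_len_nonneg[OF _ nonneg] le by simp_all
qed

lemma sp_dist_nonneg:
  assumes nonneg: "\<And>u v. (u, v) \<in> E \<Longrightarrow> 0 \<le> w u v"
  shows "0 \<le> sp_dist E w S a b"
proof -
  have "0 \<le> sp_dist E w S a b + 0"
  proof (rule le_sp_dist_add[OF nonneg order_refl])
    fix xs assume "is_walk E xs"
    then show "0 \<le> ereal (walk_len w xs) + 0" using walk_len_nonneg[OF _ nonneg] by simp
  qed
  then show ?thesis by simp
qed

lemma sp_dist_refl: "a \<in> S \<Longrightarrow> sp_dist E w S a a \<le> 0"
  using sp_dist_le_walk_len[of E "[a]" a a S w] by (simp add: zero_ereal_def)

lemma sp_dist_triangle:
  assumes nonneg: "\<And>u v. (u, v) \<in> E \<Longrightarrow> 0 \<le> w u v" and "S' \<subseteq> S"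
  shows "sp_dist E w S a c \<le> sp_dist E w S a b + sp_dist E w S' b c"
proof -
  have via_ys: "sp_dist E w S a c \<le> ereal (walk_len w ys) + sp_dist E w S a b"
    if ys: "is_walk E ys" "hd ys = b" "last ys = c" "set ys \<subseteq> S'" for ys
  proof -
    have "sp_dist E w S a c \<le> sp_dist E w S a b + ereal (walk_len w ys)"
    proof (rule le_sp_dist_add[OF nonneg])
      show "0 \<le> ereal (walk_len w ys)" using walk_len_nonneg[OF ys(1) nonneg] by simp
      fix xs assume xs: "is_walk E xs" "hd xs = a" "last xs = b" "set xs \<subseteq> S"
      have ne: "xs \<noteq> []" "ys \<noteq> []" using xs ys by auto
      have "set (tl ys) \<subseteq> S" using ys(4) \<open>S' \<subseteq> S\<close> by (cases ys) auto
      then have "sp_dist E w S a c \<le> ereal (walk_len w (xs @ tl ys))"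
        using xs ys ne by (intro sp_dist_le_walk_len is_walk_join) (auto simp: last_append_tl)
      then show "sp_dist E w S a c \<le> ereal (walk_len w xs) + ereal (walk_len w ys)"
        using walk_len_join[OF xs(1) ys(1)] xs ys by simp
    qed
    then show ?thesis by (simp add: add.commute)
  qed
  have "sp_dist E w S a c \<le> sp_dist E w S' b c + sp_dist E w S a b"
    by (rule le_sp_dist_add[OF nonneg sp_dist_nonneg[OF nonneg] via_ys])
  then show ?thesis by (simp add: add.commute)
qed

lemma sp_dist_triangle_edge:
  assumes "\<And>u v. (u, v) \<in> E \<Longrightarrow> 0 \<le> w u v" and "(b, c) \<in> E" "b \<in> S" "c \<in> S"
  shows "sp_dist E w S a c \<le> sp_dist E w S a b + ereal (w b c)"
proof -
  have "sp_dist E w S b c \<le> ereal (w b c)"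
    using sp_dist_le_walk_len[of E "[b, c]" b c S w] assms(2-4) by simp
  then show ?thesis
    using sp_dist_triangle[OF assms(1) order_refl, where a = a and b = b and c = c]
    by (meson add_left_mono order_trans)
qed

section \<open>The global bound\<close>

lemma sorted_nth_le_iff_length_filter:
  fixes xs :: "'a::linorder list"
  assumes "sorted xs" and "0 < k" "k \<le> length xs"
  shows "xs ! (k - 1) \<le> x \<longleftrightarrow> k \<le> length (filter (\<lambda>y. y \<le> x) xs)"
proof -
  let ?P = "\<lambda>y. y \<le> x"
  have "filter ?P xs = takeWhile ?P xs"
  proof (rule takeWhile_eq_filter[symmetric])
    fix y assume y: "y \<in> set (dropWhile ?P xs)"
    then obtain z zs where dz: "dropWhile ?P xs = z # zs" by (cases "dropWhile ?P xs") auto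
    then have "\<not> ?P z" by (simp add: dropWhile_eq_Cons_conv)
    moreover have "z \<le> y" using y dz sorted_dropWhile[OF assms(1), of ?P] by auto
    ultimately show "\<not> ?P y" by auto
  qed
  moreover have "?P (xs ! (k - 1)) \<longleftrightarrow> k \<le> length (takeWhile ?P xs)"
  proof
    assume le: "?P (xs ! (k - 1))"
    show "k \<le> length (takeWhile ?P xs)"
    proof (rule ccontr)
      assume "\<not> k \<le> length (takeWhile ?P xs)"
      then have "length (takeWhile ?P xs) \<le> k - 1" by simp
      then have "xs ! length (takeWhile ?P xs) \<le> xs ! (k - 1)"
        using assms by (intro sorted_nth_mono) auto
      moreover have "\<not> ?P (xs ! length (takeWhile ?P xs))"
        using \<open>\<not> k \<le> _\<close> assms(3) by (intro nth_length_takeWhile) simp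
      ultimately show False using le by simp
    qed
  next
    assume "k \<le> length (takeWhile ?P xs)"
    then have "xs ! (k - 1) \<in> set (takeWhile ?P xs)"
      using assms(2) takeWhile_nth[of "k - 1" ?P xs] nth_mem[of "k - 1" "takeWhile ?P xs"] by simp
    then show "?P (xs ! (k - 1))" by (rule set_takeWhileD[THEN conjunct2])
  qed
  ultimately show ?thesis by simp
qed

lemma length_filter_sorted_list_of_multiset:
  assumes "finite A"
  shows "length (filter (\<lambda>y. y \<le> x) (sorted_list_of_multiset (image_mset f (mset_set A))))
     = card {a \<in> A. f a \<le> x}"
proof -
  have "length (filter (\<lambda>y. y \<le> x) (sorted_list_of_multiset (image_mset f (mset_set A))))
      = size (filter_mset (\<lambda>y. y \<le> x) (image_mset f (mset_set A)))"
    by (metis mset_filter size_mset mset_sorted_list_of_multiset)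
  also have "\<dots> = size (image_mset f (filter_mset (\<lambda>a. f a \<le> x) (mset_set A)))"
    by (simp add: filter_mset_image_mset)
  finally show ?thesis using assms by simp
qed

lemma geps_le_iff:
  assumes "finite (rep_objs s)" and "0 < kq N" "kq N \<le> card (rep_objs s)"
  shows "geps N s \<le> x \<longleftrightarrow> kq N \<le> card {ob \<in> rep_objs s. rep s ob \<le> x}"
proof -
  let ?xs = "sorted_list_of_multiset (image_mset (rep s) (mset_set (rep_objs s)))"
  have "length ?xs = card (rep_objs s)"
    by (metis size_image_mset size_mset size_mset_set mset_sorted_list_of_multiset)
  then show ?thesis
    using assms sorted_nth_le_iff_length_filter[of ?xs "kq N" x]
      length_filter_sorted_list_of_multiset[OF assms(1), where f = "rep s"]
    by (simp add: geps_def)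
qed

lemma rep_le: "(ob, x) \<in> reps s \<Longrightarrow> rep s ob \<le> x"
  unfolding rep_def by (rule Inf_lower) simp

lemma rep_unreported:
  assumes "ob \<notin> rep_objs s"
  shows "rep s ob = \<infinity>"
proof -
  have "{d. (ob, d) \<in> reps s} = {}" using assms unfolding rep_objs_def by force
  then show ?thesis unfolding rep_def by (simp add: top_ereal_def)
qed

lemma rep_antimono: "reps s \<subseteq> reps s' \<Longrightarrow> rep s' ob \<le> rep s ob"
  unfolding rep_def by (rule Inf_superset_mono) auto

text \<open>For kq N = 0, geps is entry 0 - 1 = 0 of the sorted reports, an unspecified value before
  the first report, so monotonicity fails; hence the invariant is only established for 0 < kq N.\<close>

lemma geps_antimono:
  assumes "reps s \<subseteq> reps s'" and "finite (rep_objs s')" and "0 < kq N"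
  shows "geps N s' \<le> geps N s"
proof (cases "card (rep_objs s) < kq N")
  case True
  then show ?thesis by (simp add: geps_def)
next
  case False
  have sub: "rep_objs s \<subseteq> rep_objs s'" using assms(1) unfolding rep_objs_def by auto
  then have fin: "finite (rep_objs s)" using assms(2) finite_subset by blast
  have "kq N \<le> card {ob \<in> rep_objs s. rep s ob \<le> geps N s}"
    using geps_le_iff[OF fin assms(3), of "geps N s"] False by simp
  also have "\<dots> \<le> card {ob \<in> rep_objs s'. rep s' ob \<le> geps N s}"
    using sub rep_antimono[OF assms(1)] assms(2) by (intro card_mono) (auto intro: order_trans)
  finally show ?thesis
    using geps_le_iff[OF assms(2,3)] card_mono[OF assms(2), of "{ob \<in> rep_objs s'. rep s' ob \<le> geps N s}"]
    by auto
qed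

lemma rep_update [simp]:
  "rep (Dt_update fd s) = rep s" "rep (leps_update fl s) = rep s" "rep (pruned_update fp s) = rep s"
  "rep (inbox_update fi s) = rep s" "rep (active_update fa s) = rep s"
  by (simp_all add: fun_eq_iff rep_def)

lemma geps_update [simp]:
  "geps N (Dt_update fd s) = geps N s" "geps N (leps_update fl s) = geps N s"
  "geps N (pruned_update fp s) = geps N s" "geps N (inbox_update fi s) = geps N s"
  "geps N (active_update fa s) = geps N s"
  by (simp_all add: geps_def rep_objs_def)

section \<open>The invariant\<close>

lemma wf_inst_wt_nonneg: "wf_inst N \<Longrightarrow> (u, v) \<in> Es N \<Longrightarrow> 0 \<le> wt N u v"
  unfolding wf_inst_def by blast

lemma SD_triangle_dsub: "wf_inst N \<Longrightarrow> SD N a c \<le> SD N a b + dsub N p b c"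
  unfolding SD_def dsub_def SG_def by (rule sp_dist_triangle[OF wf_inst_wt_nonneg]) auto

lemma SD_triangle_edge:
  "wf_inst N \<Longrightarrow> (b, c) \<in> Es N \<Longrightarrow> b \<in> Vs N \<Longrightarrow> c \<in> Vs N \<Longrightarrow> SD N a c \<le> SD N a b + ereal (wt N b c)"
  unfolding SD_def by (rule sp_dist_triangle_edge[OF wf_inst_wt_nonneg])

lemma dsub_triangle_edge:
  "wf_inst N \<Longrightarrow> (b, c) \<in> Es N \<Longrightarrow> b \<in> SG N p \<Longrightarrow> c \<in> SG N p \<Longrightarrow>
   dsub N p a c \<le> dsub N p a b + ereal (wt N b c)"
  unfolding dsub_def by (rule sp_dist_triangle_edge[OF wf_inst_wt_nonneg])

lemma add_dsub_refl_le: "v \<in> SG N p \<Longrightarrow> d + dsub N p v v \<le> d"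
  using add_left_mono[OF sp_dist_refl[of v "SG N p" "Es N" "wt N"], of d] by (simp add: dsub_def)

lemma in_SG_iff: "v \<in> SG N p \<longleftrightarrow> v \<in> Vs N \<and> part N v = p"
  unfolding SG_def by simp

lemma live_set_subset_SG: "live_set N p \<subseteq> SG N p"
  unfolding live_set_def by auto

lemma ext_edgesD:
  "(vj, v') \<in> ext_edges N p \<Longrightarrow> vj \<in> SG N p \<and> v' \<in> Vs N \<and> part N v' \<noteq> p \<and> (vj, v') \<in> Es N"
  unfolding ext_edges_def is_border_def by auto

text \<open>L and B are the live vertices and external edges not yet handled for the message (vb, d).\<close>

definition propagated ::
  "('v, 'p, 'o) dknn_inst \<Rightarrow> 'p \<Rightarrow> ('v \<Rightarrow> ereal) \<Rightarrow> 'v \<Rightarrow> ereal \<Rightarrow> 'v set \<Rightarrow> ('v \<times> 'v) set \<Rightarrow> bool"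
where
  "propagated N p D vb d L B \<longleftrightarrow>
     (\<forall>vj v'. (vj, v') \<in> ext_edges N p - B \<longrightarrow> D v' \<le> d + dsub N p vb vj + ereal (wt N vj v')) \<and>
     (\<forall>vi \<in> live_set N p - L. D vi \<le> d + dsub N p vb vi)"

lemma propagated_antimono:
  assumes "D' \<le> D" and "propagated N p D vb d L B"
  shows "propagated N p D' vb d L B"
proof -
  have "D' v \<le> D v" for v using assms(1) by (simp add: le_fun_def)
  then show ?thesis using assms(2) unfolding propagated_def by (meson order_trans)
qed

lemma propagated_live:
  "propagated N p D vb d L B \<Longrightarrow> D vi \<le> d + dsub N p vb vi \<Longrightarrow> propagated N p D vb d (L - {vi}) B"
  unfolding propagated_def by auto

lemma propagated_ext:
  "propagated N p D vb d L B \<Longrightarrow> D v' \<le> d + dsub N p vb vj + ereal (wt N vj v') \<Longrightarrow>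
   propagated N p D vb d L (B - {(vj, v')})"
  unfolding propagated_def by auto

lemma fun_upd_le_self:
  fixes f :: "'a \<Rightarrow> 'b::preorder"
  shows "c \<le> f x \<Longrightarrow> f(x := c) \<le> f"
  by (simp add: le_fun_def)

definition msgs_sound :: "('v, 'p, 'o) dknn_inst \<Rightarrow> ('v, 'p, 'o) dstate \<Rightarrow> bool" where
  "msgs_sound N s \<longleftrightarrow> (\<forall>v c. (v, c) \<in># inbox s \<longrightarrow> v \<in> Vs N \<and> SD N (vq N) v \<le> c)"

definition active_sound :: "('v, 'p, 'o) dknn_inst \<Rightarrow> ('v, 'p, 'o) dstate \<Rightarrow> bool" where
  "active_sound N s \<longleftrightarrow> (\<forall>p vb d L B. active s p = Some ((vb, d), L, B) \<longrightarrow>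
     vb \<in> SG N p \<and> SD N (vq N) vb \<le> d \<and> L \<subseteq> live_set N p \<and> B \<subseteq> ext_edges N p \<and>
     propagated N p (Dt s p) vb d L B)"

definition reps_sound :: "('v, 'p, 'o) dknn_inst \<Rightarrow> ('v, 'p, 'o) dstate \<Rightarrow> bool" where
  "reps_sound N s \<longleftrightarrow> (\<forall>(ob, x) \<in> reps s. ob \<in> Obj N \<and> SD_obj N ob \<le> x)"

definition bounds_valid :: "('v, 'p, 'o) dknn_inst \<Rightarrow> ('v, 'p, 'o) dstate \<Rightarrow> bool" where
  "bounds_valid N s \<longleftrightarrow> (\<forall>p. p \<notin> pruned s \<longrightarrow> geps N s \<le> leps s p) \<and>
     (\<forall>p \<in> pruned s. p \<noteq> part N (vq N) \<and> geps N s < Edist N p)"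

text \<open>F is a ghost component: F p collects the messages whose processing by SG_p has finished.\<close>

definition finished_propagated ::
  "('v, 'p, 'o) dknn_inst \<Rightarrow> ('v, 'p, 'o) dstate \<Rightarrow> ('p \<Rightarrow> ('v \<times> ereal) set) \<Rightarrow> bool"
where
  "finished_propagated N s F \<longleftrightarrow> (\<forall>p vb d. (vb, d) \<in> F p \<longrightarrow> propagated N p (Dt s p) vb d {} {})"

definition entries :: "('v, 'p, 'o) dstate \<Rightarrow> ('p \<Rightarrow> ('v \<times> ereal) set) \<Rightarrow> 'p \<Rightarrow> ('v \<times> ereal) set" where
  "entries s F p = F p \<union> (case active s p of None \<Rightarrow> {} | Some (m, _) \<Rightarrow> {m})"

definition covered ::
  "('v, 'p, 'o) dknn_inst \<Rightarrow> ('v, 'p, 'o) dstate \<Rightarrow> ('p \<Rightarrow> ('v \<times> ereal) set) \<Rightarrow> 'v \<Rightarrow> ereal \<Rightarrow> bool"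
where
  "covered N s F v x \<longleftrightarrow> part N v \<in> pruned s \<or> geps N s \<le> x \<or>
     (\<exists>(e, d) \<in> entries s F (part N v). d + dsub N (part N v) e v \<le> x) \<or>
     (\<exists>c \<le> x. (v, c) \<in># inbox s)"

definition tables_covered ::
  "('v, 'p, 'o) dknn_inst \<Rightarrow> ('v, 'p, 'o) dstate \<Rightarrow> ('p \<Rightarrow> ('v \<times> ereal) set) \<Rightarrow> bool"
where
  "tables_covered N s F \<longleftrightarrow> (\<forall>p v. v \<in> Vs N \<longrightarrow> covered N s F v (Dt s p v)) \<and> covered N s F (vq N) 0"

definition live_pending :: "('v, 'p, 'o) dknn_inst \<Rightarrow> ('v, 'p, 'o) dstate \<Rightarrow> 'p \<Rightarrow> 'v \<Rightarrow> bool" where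
  "live_pending N s p v \<longleftrightarrow>
     (\<exists>vb d L B. active s p = Some ((vb, d), L, B) \<and> v \<in> L \<and> d + dsub N p vb v \<le> Dt s p v)"

definition live_reported :: "('v, 'p, 'o) dknn_inst \<Rightarrow> ('v, 'p, 'o) dstate \<Rightarrow> bool" where
  "live_reported N s \<longleftrightarrow> (\<forall>p ob. p \<notin> pruned s \<longrightarrow> ob \<in> Obj N \<longrightarrow> vloc N ob \<in> SG N p \<longrightarrow>
     min (rep s ob) (geps N s) \<le> Dt s p (vloc N ob) + ereal (rem N ob) \<or> live_pending N s p (vloc N ob))"

definition dknn_inv ::
  "('v, 'p, 'o) dknn_inst \<Rightarrow> ('v, 'p, 'o) dstate \<Rightarrow> ('p \<Rightarrow> ('v \<times> ereal) set) \<Rightarrow> bool"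
where
  "dknn_inv N s F \<longleftrightarrow> msgs_sound N s \<and> active_sound N s \<and> reps_sound N s \<and> bounds_valid N s \<and>
     finished_propagated N s F \<and> tables_covered N s F \<and> live_reported N s"

lemma covered_mono: "covered N s F v x \<Longrightarrow> x \<le> y \<Longrightarrow> covered N s F v y"
  unfolding covered_def by (blast intro: order_trans)

lemma covered_transfer:
  assumes "covered N s F v x" and "pruned s \<subseteq> pruned s'" "geps N s' \<le> geps N s"
    and "\<And>p. entries s F p \<subseteq> entries s' F' p" and "set_mset (inbox s) \<subseteq> set_mset (inbox s')"
  shows "covered N s' F' v x"
  using assms unfolding covered_def by (blast intro: order_trans)

lemma covered_consume:
  assumes cov: "covered N s F v x" and "pruned s \<subseteq> pruned s'" "geps N s' \<le> geps N s"
    and "\<And>p. entries s F p \<subseteq> entries s' F' p" and ib: "inbox s' = inbox s - {#(vb, d)#}"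
    and consumed: "v = vb \<Longrightarrow> d \<le> x \<Longrightarrow> covered N s' F' v x"
  shows "covered N s' F' v x"
proof -
  consider "part N v \<in> pruned s" | "geps N s \<le> x"
    | "\<exists>(e, d') \<in> entries s F (part N v). d' + dsub N (part N v) e v \<le> x"
    | c where "c \<le> x" "(v, c) \<in># inbox s"
    using cov unfolding covered_def by blast
  then show ?thesis
  proof cases
    case 4
    show ?thesis
    proof (cases "(v, c) = (vb, d)")
      case True
      then show ?thesis using consumed 4 by simp
    next
      case False
      then have "(v, c) \<in># inbox s'" using 4(2) ib by (auto simp: in_diff_count)
      then show ?thesis using 4(1) unfolding covered_def by blast
    qed
  qed (use assms(2-4) in \<open>auto simp: covered_def intro: order_trans\<close>)
qed

lemma dknn_inv_init: "wf_inst N \<Longrightarrow> dknn_inv N (init_state N) (\<lambda>_. {})"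
  unfolding dknn_inv_def msgs_sound_def active_sound_def reps_sound_def bounds_valid_def
    finished_propagated_def tables_covered_def covered_def live_reported_def init_state_def
  by (auto simp: wf_inst_def SD_def sp_dist_refl rep_def top_ereal_def)

lemma dknn_invD:
  assumes "dknn_inv N s F"
  shows "msgs_sound N s" "active_sound N s" "reps_sound N s" "bounds_valid N s"
    "finished_propagated N s F" "tables_covered N s F" "live_reported N s"
  using assms unfolding dknn_inv_def by simp_all

lemma finite_rep_objs:
  assumes "wf_inst N" and "reps_sound N s"
  shows "finite (rep_objs s)"
proof -
  have "rep_objs s \<subseteq> Obj N" using assms(2) unfolding reps_sound_def rep_objs_def by force
  then show ?thesis using assms(1) finite_subset unfolding wf_inst_def by blast
qed

lemma min_rep_geps_le_report:
  assumes "geps N s \<le> e" and "x < e \<Longrightarrow> (ob, x) \<in> reps s"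
  shows "min (rep s ob) (geps N s) \<le> x"
proof (cases "x < e")
  case True
  then show ?thesis using rep_le[OF assms(2)[OF True]] by (simp add: min.coboundedI1)
next
  case False
  then show ?thesis using assms(1) by (simp add: min.coboundedI2)
qed

lemma live_reported_keep:
  assumes "live_reported N s" and "q \<notin> pruned s" "ob \<in> Obj N" "vloc N ob \<in> SG N q"
    and "min (rep s' ob) (geps N s') \<le> min (rep s ob) (geps N s)"
    and "Dt s' q (vloc N ob) = Dt s q (vloc N ob)"
    and "live_pending N s q (vloc N ob) \<Longrightarrow> live_pending N s' q (vloc N ob)"
  shows "min (rep s' ob) (geps N s') \<le> Dt s' q (vloc N ob) + ereal (rem N ob) \<or>
    live_pending N s' q (vloc N ob)"
proof -
  have "min (rep s ob) (geps N s) \<le> Dt s q (vloc N ob) + ereal (rem N ob) \<or>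
      live_pending N s q (vloc N ob)"
    using assms(1-4) unfolding live_reported_def by simp
  then show ?thesis using order_trans[OF assms(5)] assms(6,7) by auto
qed

lemma active_soundD:
  assumes "active_sound N s" and "active s p = Some ((vb, d), L, B)"
  shows "vb \<in> SG N p" "SD N (vq N) vb \<le> d" "L \<subseteq> live_set N p" "B \<subseteq> ext_edges N p"
    "propagated N p (Dt s p) vb d L B"
  using assms(1)[unfolded active_sound_def, rule_format, OF assms(2)] by simp_all

lemma dknn_inv_discard:
  assumes inv: "dknn_inv N s F" and m: "(vb, d) \<in># inbox s" and p: "p = part N vb"
    and dropped: "p \<in> pruned s \<or> d > leps s p \<or> d > Dt s p vb"
  shows "dknn_inv N (s\<lparr>inbox := inbox s - {#(vb, d)#}\<rparr>) F" (is "dknn_inv N ?s F")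
proof -
  note msgs = dknn_invD(1)[OF inv, unfolded msgs_sound_def]
  note cov = dknn_invD(6)[OF inv, unfolded tables_covered_def]
  have dropped_covered: "covered N ?s F vb x" if "d \<le> x" for x
  proof -
    consider "p \<in> pruned s" | "p \<notin> pruned s" "leps s p < d" | "Dt s p vb < d"
      using dropped by auto
    then show ?thesis
    proof cases
      case 1
      then show ?thesis using p unfolding covered_def by simp
    next
      case 2
      then have "geps N s \<le> x"
        using dknn_invD(4)[OF inv] \<open>d \<le> x\<close> unfolding bounds_valid_def
        by (meson less_imp_le order_trans)
      then show ?thesis unfolding covered_def by simp
    next
      case 3
      have "covered N s F vb (Dt s p vb)" using cov m msgs by blast
      then have "covered N ?s F vb (Dt s p vb)"
        by (rule covered_consume) (use 3 in \<open>auto simp: entries_def\<close>)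
      then show ?thesis using 3 \<open>d \<le> x\<close> by (elim covered_mono) simp
    qed
  qed
  have keep: "covered N ?s F v x" if "covered N s F v x" for v x
    by (rule covered_consume[OF that]) (auto simp: entries_def dropped_covered)
  have "msgs_sound N ?s" using msgs unfolding msgs_sound_def by (auto dest: in_diffD)
  moreover have "tables_covered N ?s F" using cov keep unfolding tables_covered_def by simp
  ultimately show ?thesis using dknn_invD[OF inv]
    unfolding dknn_inv_def active_sound_def reps_sound_def bounds_valid_def finished_propagated_def
      live_reported_def live_pending_def
    by simp
qed

lemma dknn_inv_start:
  assumes inv: "dknn_inv N s F" and m: "(vb, d) \<in># inbox s" and p: "p = part N vb"
    and idle: "active s p = None" and improves: "d \<le> Dt s p vb"
  shows "dknn_inv N (s\<lparr>inbox := inbox s - {#(vb, d)#}, Dt := (Dt s)(p := (Dt s p)(vb := d)),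
           active := (active s)(p := Some ((vb, d), live_set N p, ext_edges N p))\<rparr>) F"
    (is "dknn_inv N ?s F")
proof -
  have vb: "vb \<in> SG N p" "SD N (vq N) vb \<le> d"
    using dknn_invD(1)[OF inv] m p unfolding msgs_sound_def in_SG_iff by auto
  have started_covered: "covered N ?s F vb x" if "d \<le> x" for x
  proof -
    have "(vb, d) \<in> entries ?s F (part N vb)" using p by (simp add: entries_def)
    then show ?thesis
      using add_dsub_refl_le[OF vb(1), of d] that p unfolding covered_def by (blast intro: order_trans)
  qed
  have keep: "covered N ?s F v x" if "covered N s F v x" for v x
    by (rule covered_consume[OF that]) (use idle started_covered in \<open>auto simp: entries_def\<close>)
  have "msgs_sound N ?s"
    using dknn_invD(1)[OF inv] unfolding msgs_sound_def by (auto dest: in_diffD)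
  moreover have "active_sound N ?s"
    using dknn_invD(2)[OF inv] vb unfolding active_sound_def propagated_def by auto
  moreover have "finished_propagated N ?s F"
    using dknn_invD(5)[OF inv] unfolding finished_propagated_def
    by (auto intro!: propagated_antimono[OF fun_upd_le_self[of d "Dt s p" vb, OF improves]])
  moreover have "tables_covered N ?s F"
    using dknn_invD(6)[OF inv] keep started_covered unfolding tables_covered_def by auto
  moreover have "live_reported N ?s"
    unfolding live_reported_def
  proof (intro allI impI)
    fix q ob assume q: "q \<notin> pruned ?s" and ob: "ob \<in> Obj N" "vloc N ob \<in> SG N q"
    show "min (rep ?s ob) (geps N ?s) \<le> Dt ?s q (vloc N ob) + ereal (rem N ob) \<or>
          live_pending N ?s q (vloc N ob)"
    proof (cases "q = p \<and> vloc N ob = vb")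
      case True
      then have "live_pending N ?s q (vloc N ob)"
        using ob add_dsub_refl_le[OF vb(1), of d] unfolding live_pending_def live_set_def by auto
      then show ?thesis ..
    next
      case False
      then have Dt_eq: "Dt ?s q (vloc N ob) = Dt s q (vloc N ob)"
        and pending: "live_pending N s q (vloc N ob) \<Longrightarrow> live_pending N ?s q (vloc N ob)"
        using idle by (auto simp: live_pending_def)
      have "q \<notin> pruned s" using q by simp
      then show ?thesis by (rule live_reported_keep[OF dknn_invD(7)[OF inv] _ ob _ Dt_eq pending]) simp
    qed
  qed
  ultimately show ?thesis using dknn_invD[OF inv]
    unfolding dknn_inv_def reps_sound_def bounds_valid_def by simp
qed

lemma dknn_inv_bound:
  assumes "dknn_inv N s F" and "geps N s \<le> e"
  shows "dknn_inv N (s\<lparr>leps := (leps s)(p := e)\<rparr>) F"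
  using dknn_invD[OF assms(1)] assms(2)
  unfolding dknn_inv_def msgs_sound_def active_sound_def reps_sound_def bounds_valid_def
    finished_propagated_def tables_covered_def covered_def entries_def live_reported_def live_pending_def
  by simp

lemma dknn_inv_prune:
  assumes "dknn_inv N s F" and "p \<noteq> part N (vq N)" and "geps N s < Edist N p"
  shows "dknn_inv N (s\<lparr>pruned := insert p (pruned s), leps := (leps s)(p := 0)\<rparr>) F"
  using dknn_invD[OF assms(1)] assms(2,3)
  unfolding dknn_inv_def msgs_sound_def active_sound_def reps_sound_def bounds_valid_def
    finished_propagated_def tables_covered_def covered_def entries_def live_reported_def live_pending_def
  by auto

lemma dknn_inv_finish:
  assumes inv: "dknn_inv N s F" and finished: "active s p = Some (m, {}, {})"
  shows "dknn_inv N (s\<lparr>active := (active s)(p := None)\<rparr>) (F(p := insert m (F p)))"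
    (is "dknn_inv N ?s ?F")
proof -
  have "propagated N p (Dt s p) (fst m) (snd m) {} {}"
    using dknn_invD(2)[OF inv] finished unfolding active_sound_def by (cases m) auto
  then have "finished_propagated N ?s ?F"
    using dknn_invD(5)[OF inv] unfolding finished_propagated_def by auto
  moreover have "entries ?s ?F q = entries s F q" for q
    using finished by (auto simp: entries_def)
  then have "tables_covered N ?s ?F"
    using dknn_invD(6)[OF inv] unfolding tables_covered_def covered_def by simp
  moreover have "live_reported N ?s"
    using dknn_invD(7)[OF inv] finished unfolding live_reported_def live_pending_def by auto
  ultimately show ?thesis using dknn_invD[OF inv]
    unfolding dknn_inv_def msgs_sound_def active_sound_def reps_sound_def bounds_valid_def by simp
qed

lemma dknn_inv_live_upd:
  assumes wf: "wf_inst N" and k: "0 < kq N" and inv: "dknn_inv N s F"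
    and act: "active s p = Some ((vb, d), L, B)" and vi: "vi \<in> L"
    and c: "c = d + dsub N p vb vi" and improves: "c \<le> Dt s p vi"
  shows "dknn_inv N (s\<lparr>Dt := (Dt s)(p := (Dt s p)(vi := c)),
      reps := reps s \<union> {(ob, c + ereal (rem N ob)) | ob.
                ob \<in> Obj N \<and> vloc N ob = vi \<and> c + ereal (rem N ob) < leps s p},
      active := (active s)(p := Some ((vb, d), L - {vi}, B))\<rparr>) F"
    (is "dknn_inv N ?s F")
proof -
  note active = active_soundD[OF dknn_invD(2)[OF inv] act]
  have vi_SG: "vi \<in> SG N p" using active(3) vi live_set_subset_SG by (meson subsetD)
  have Dt_le: "Dt ?s q \<le> Dt s q" for q using fun_upd_le_self[of c "Dt s p" vi, OF improves] by simp
  have "SD N (vq N) vi \<le> SD N (vq N) vb + dsub N p vb vi" by (rule SD_triangle_dsub[OF wf])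
  also have "\<dots> \<le> c" using active(2) c by (simp add: add_right_mono)
  finally have "SD_obj N ob \<le> c + ereal (rem N ob)" if "vloc N ob = vi" for ob
    unfolding SD_obj_def using that by (simp add: add_right_mono)
  then have reps: "reps_sound N ?s" using dknn_invD(3)[OF inv] unfolding reps_sound_def by auto
  have geps_le: "geps N ?s \<le> geps N s"
    by (rule geps_antimono[OF _ finite_rep_objs[OF wf reps] k]) auto
  have entries: "entries ?s F q = entries s F q" for q using act by (simp add: entries_def)
  have "propagated N p (Dt ?s p) vb d (L - {vi}) B"
    using propagated_live[OF propagated_antimono[OF Dt_le active(5)]] c by simp
  then have "active_sound N ?s"
    using dknn_invD(2)[OF inv] active(1-4) unfolding active_sound_def by auto
  moreover have "finished_propagated N ?s F"
    using dknn_invD(5)[OF inv] unfolding finished_propagated_def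
    by (auto intro!: propagated_antimono[OF fun_upd_le_self[of c "Dt s p" vi, OF improves]])
  moreover have "bounds_valid N ?s"
    using dknn_invD(4)[OF inv] unfolding bounds_valid_def
    by (auto simp del: geps_update intro: order_trans[OF geps_le] le_less_trans[OF geps_le])
  moreover have "tables_covered N ?s F"
  proof -
    have "(vb, d) \<in> entries ?s F p" by (simp add: entries_def)
    then have "covered N ?s F vi c"
      using vi_SG c unfolding covered_def in_SG_iff by fastforce
    moreover have "covered N ?s F v x" if "covered N s F v x" for v x
      by (rule covered_transfer[OF that]) (use geps_le entries in simp_all)
    ultimately show ?thesis using dknn_invD(6)[OF inv] unfolding tables_covered_def by auto
  qed
  moreover have "live_reported N ?s"
    unfolding live_reported_def
  proof (intro allI impI)
    fix q ob assume q: "q \<notin> pruned ?s" and ob: "ob \<in> Obj N" "vloc N ob \<in> SG N q"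
    show "min (rep ?s ob) (geps N ?s) \<le> Dt ?s q (vloc N ob) + ereal (rem N ob) \<or>
          live_pending N ?s q (vloc N ob)"
    proof (cases "q = p \<and> vloc N ob = vi")
      case True
      have "geps N s \<le> leps s p" using dknn_invD(4)[OF inv] q True unfolding bounds_valid_def by simp
      then have "min (rep ?s ob) (geps N ?s) \<le> c + ereal (rem N ob)"
        by (rule min_rep_geps_le_report[OF order_trans[OF geps_le]]) (use ob True in simp)
      then show ?thesis using True by simp
    next
      case False
      have min_le: "min (rep ?s ob) (geps N ?s) \<le> min (rep s ob) (geps N s)"
        by (rule min.mono[OF rep_antimono geps_le]) simp
      have Dt_eq: "Dt ?s q (vloc N ob) = Dt s q (vloc N ob)"
        and pending: "live_pending N s q (vloc N ob) \<Longrightarrow> live_pending N ?s q (vloc N ob)"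
        using False act by (auto simp: live_pending_def)
      have "q \<notin> pruned s" using q by simp
      then show ?thesis by (rule live_reported_keep[OF dknn_invD(7)[OF inv] _ ob min_le Dt_eq pending])
    qed
  qed
  ultimately show ?thesis
    using dknn_invD(1)[OF inv] reps unfolding dknn_inv_def msgs_sound_def by simp
qed

lemma dknn_inv_live_skip:
  assumes inv: "dknn_inv N s F" and act: "active s p = Some ((vb, d), L, B)"
    and skip: "\<not> d + dsub N p vb vi \<le> Dt s p vi"
  shows "dknn_inv N (s\<lparr>active := (active s)(p := Some ((vb, d), L - {vi}, B))\<rparr>) F"
    (is "dknn_inv N ?s F")
proof -
  note active = active_soundD[OF dknn_invD(2)[OF inv] act]
  have "propagated N p (Dt s p) vb d (L - {vi}) B"
    using propagated_live[OF active(5)] skip by simp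
  then have "active_sound N ?s"
    using dknn_invD(2)[OF inv] active(1-4) unfolding active_sound_def by auto
  moreover have "entries ?s F q = entries s F q" for q using act by (simp add: entries_def)
  then have "tables_covered N ?s F"
    using dknn_invD(6)[OF inv] unfolding tables_covered_def covered_def by simp
  moreover have pending: "live_pending N ?s q v" if "live_pending N s q v" for q v
    using that act skip by (auto simp: live_pending_def)
  then have "live_reported N ?s"
    using dknn_invD(7)[OF inv] unfolding live_reported_def by auto
  ultimately show ?thesis using dknn_invD[OF inv]
    unfolding dknn_inv_def msgs_sound_def reps_sound_def bounds_valid_def finished_propagated_def
    by simp
qed

lemma dknn_inv_ext_upd:
  assumes wf: "wf_inst N" and inv: "dknn_inv N s F" and act: "active s p = Some ((vb, d), L, B)"
    and e: "(vj, v') \<in> B" and c: "c = d + dsub N p vb vj + ereal (wt N vj v')"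
    and improves: "c \<le> Dt s p v'"
  shows "dknn_inv N (s\<lparr>Dt := (Dt s)(p := (Dt s p)(v' := c)), inbox := inbox s + {#(v', c)#},
      active := (active s)(p := Some ((vb, d), L, B - {(vj, v')}))\<rparr>) F"
    (is "dknn_inv N ?s F")
proof -
  note active = active_soundD[OF dknn_invD(2)[OF inv] act]
  have edge: "vj \<in> SG N p" "v' \<in> Vs N" "part N v' \<noteq> p" "(vj, v') \<in> Es N"
    using ext_edgesD[of vj v' N p] active(4) e by auto
  have Dt_p_le: "(Dt s p)(v' := c) \<le> Dt s p" by (rule fun_upd_le_self[of c "Dt s p" v', OF improves])
  have "SD N (vq N) v' \<le> SD N (vq N) vj + ereal (wt N vj v')"
    using edge by (intro SD_triangle_edge[OF wf]) (auto simp: in_SG_iff)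
  also have "\<dots> \<le> SD N (vq N) vb + dsub N p vb vj + ereal (wt N vj v')"
    using SD_triangle_dsub[OF wf] by (intro add_right_mono)
  also have "\<dots> \<le> c" using active(2) c by (simp add: add_right_mono)
  finally have "msgs_sound N ?s"
    using dknn_invD(1)[OF inv] edge(2) unfolding msgs_sound_def by auto
  moreover have "propagated N p ((Dt s p)(v' := c)) vb d L (B - {(vj, v')})"
    using propagated_ext[OF propagated_antimono[OF Dt_p_le active(5)]] c by simp
  then have "active_sound N ?s"
    using dknn_invD(2)[OF inv] active(1-4) unfolding active_sound_def by auto
  moreover have "finished_propagated N ?s F"
    using dknn_invD(5)[OF inv] unfolding finished_propagated_def
    by (auto intro!: propagated_antimono[OF Dt_p_le])
  moreover have "tables_covered N ?s F"
  proof -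
    have "covered N ?s F v' c" unfolding covered_def by auto
    moreover have "covered N ?s F v x" if "covered N s F v x" for v x
      by (rule covered_transfer[OF that]) (use act in \<open>auto simp: entries_def\<close>)
    ultimately show ?thesis using dknn_invD(6)[OF inv] unfolding tables_covered_def by auto
  qed
  moreover have "live_reported N ?s"
  proof -
    have Dt_eq: "Dt ?s q v = Dt s q v" if "v \<in> SG N q" for q v
      using that edge(3) by (auto simp: in_SG_iff)
    have "v' \<notin> L" using active(3) live_set_subset_SG[of N p] edge(3) by (auto simp: in_SG_iff)
    then have "live_pending N ?s q v" if "live_pending N s q v" for q v
      using that act by (auto simp: live_pending_def)
    then show ?thesis using dknn_invD(7)[OF inv] Dt_eq unfolding live_reported_def by auto
  qed
  ultimately show ?thesis using dknn_invD[OF inv]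
    unfolding dknn_inv_def reps_sound_def bounds_valid_def by simp
qed

lemma dknn_inv_ext_skip:
  assumes inv: "dknn_inv N s F" and act: "active s p = Some ((vb, d), L, B)"
    and skip: "\<not> d + dsub N p vb vj + ereal (wt N vj v') \<le> Dt s p v'"
  shows "dknn_inv N (s\<lparr>active := (active s)(p := Some ((vb, d), L, B - {(vj, v')}))\<rparr>) F"
    (is "dknn_inv N ?s F")
proof -
  note active = active_soundD[OF dknn_invD(2)[OF inv] act]
  have "propagated N p (Dt s p) vb d L (B - {(vj, v')})"
    using propagated_ext[OF active(5)] skip by simp
  then have "active_sound N ?s"
    using dknn_invD(2)[OF inv] active(1-4) unfolding active_sound_def by auto
  moreover have "entries ?s F q = entries s F q" for q using act by (simp add: entries_def)
  then have "tables_covered N ?s F"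
    using dknn_invD(6)[OF inv] unfolding tables_covered_def covered_def by simp
  moreover have "live_pending N ?s q v" if "live_pending N s q v" for q v
    using that act by (auto simp: live_pending_def)
  then have "live_reported N ?s"
    using dknn_invD(7)[OF inv] unfolding live_reported_def by auto
  ultimately show ?thesis using dknn_invD[OF inv]
    unfolding dknn_inv_def msgs_sound_def reps_sound_def bounds_valid_def finished_propagated_def
    by simp
qed

lemma dknn_inv_step:
  assumes wf: "wf_inst N" and k: "0 < kq N" and inv: "dknn_inv N s F" and "dstep N s s'"
  shows "\<exists>F'. dknn_inv N s' F'"
  using \<open>dstep N s s'\<close>
proof (cases rule: dstep.cases)
  case (discard vb d p)
  then show ?thesis using dknn_inv_discard[OF inv] by blast
next
  case (start vb d p)
  then show ?thesis using dknn_inv_start[OF inv] by blast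
next
  case (live_upd p vb d L B vi c)
  then show ?thesis using dknn_inv_live_upd[OF wf k inv] by blast
next
  case (live_skip p vb d L B vi)
  then show ?thesis using dknn_inv_live_skip[OF inv] by blast
next
  case (ext_upd p vb d L B vj v' c)
  then show ?thesis using dknn_inv_ext_upd[OF wf inv] by blast
next
  case (ext_skip p vb d L B vj v')
  then show ?thesis using dknn_inv_ext_skip[OF inv] by blast
next
  case (finish p m)
  then show ?thesis using dknn_inv_finish[OF inv] by blast
next
  case (bound p e)
  then show ?thesis using dknn_inv_bound[OF inv] by blast
next
  case (prune p)
  then show ?thesis using dknn_inv_prune[OF inv] by blast
qed

lemma reachable_dknn_inv:
  assumes "wf_inst N" and "0 < kq N" and "reachable N s"
  shows "\<exists>F. dknn_inv N s F"
  using assms(3) unfolding reachable_def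
proof (induction rule: rtranclp_induct)
  case base
  then show ?case using dknn_inv_init[OF assms(1)] by blast
next
  case (step s s')
  then show ?case using dknn_inv_step[OF assms(1,2)] by blast
qed

lemma reachable_rep_objs_subset: "reachable N s \<Longrightarrow> rep_objs s \<subseteq> Obj N"
  unfolding reachable_def rep_objs_def
proof (induction rule: rtranclp_induct)
  case base
  then show ?case by (simp add: init_state_def)
next
  case (step s s')
  from step(2) show ?case by (cases rule: dstep.cases) (use step(3) in auto)
qed

section \<open>Quiescent states\<close>

definition settled ::
  "('v, 'p, 'o) dknn_inst \<Rightarrow> ('v, 'p, 'o) dstate \<Rightarrow> ('p \<Rightarrow> ('v \<times> ereal) set) \<Rightarrow> 'v \<Rightarrow> ereal \<Rightarrow> bool"
where
  "settled N s F v x \<longleftrightarrow> geps N s \<le> x \<or>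
     (part N v \<notin> pruned s \<and> (\<exists>e d. (e, d) \<in> F (part N v) \<and> d + dsub N (part N v) e v \<le> x))"

lemma settled_if_covered:
  assumes "buffer_empty s" and "covered N s F v x" and "part N v \<in> pruned s \<Longrightarrow> geps N s \<le> x"
  shows "settled N s F v x"
  using assms unfolding buffer_empty_def covered_def settled_def entries_def by auto

lemma Edist_le: "is_border N p b \<Longrightarrow> Edist N p \<le> ereal (norm (vpos N (vq N) - vpos N b))"
  unfolding Edist_def by (rule Inf_lower) blast

lemma settled_edge:
  assumes wf: "wf_inst N" and inv: "dknn_inv N s F" and quiet: "buffer_empty s"
    and settled: "settled N s F u x" and edge: "(u, y) \<in> Es N" "u \<in> Vs N" "y \<in> Vs N"
    and far: "ereal (norm (vpos N (vq N) - vpos N y)) \<le> x + ereal (wt N u y)"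
  shows "settled N s F y (x + ereal (wt N u y))"
proof -
  let ?p = "part N u" and ?x' = "x + ereal (wt N u y)"
  have x_le: "x \<le> ?x'" using wf_inst_wt_nonneg[OF wf edge(1)] by (simp add: add_increasing2)
  consider "geps N s \<le> x"
    | e d where "?p \<notin> pruned s" "(e, d) \<in> F ?p" "d + dsub N ?p e u \<le> x"
    using settled unfolding settled_def by blast
  then show ?thesis
  proof cases
    case 1
    then show ?thesis using x_le unfolding settled_def by (blast intro: order_trans)
  next
    case 2
    have u: "u \<in> SG N ?p" using edge(2) by (simp add: in_SG_iff)
    have via_u: "d + dsub N ?p e u + ereal (wt N u y) \<le> ?x'" using 2(3) by (rule add_right_mono)
    show ?thesis
    proof (cases "part N y = ?p")
      case True
      have "dsub N ?p e y \<le> dsub N ?p e u + ereal (wt N u y)"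
        using edge True by (intro dsub_triangle_edge[OF wf]) (auto simp: in_SG_iff)
      then have "d + dsub N ?p e y \<le> ?x'"
        using via_u by (metis add.assoc add_left_mono order_trans)
      then show ?thesis using 2 True unfolding settled_def by auto
    next
      case False
      have "(u, y) \<in> ext_edges N ?p"
        using u edge False unfolding ext_edges_def is_border_def by auto
      then have "Dt s ?p y \<le> ?x'"
        using dknn_invD(5)[OF inv] 2(2) via_u unfolding finished_propagated_def propagated_def
        by (meson DiffI empty_iff order_trans)
      then have covered: "covered N s F y ?x'"
        using dknn_invD(6)[OF inv] edge(3) unfolding tables_covered_def by (meson covered_mono)
      have "geps N s \<le> ?x'" if "part N y \<in> pruned s"
      proof -
        \<comment> \<open>y is a border vertex of its pruned subgraph, so the Euclidean bound applies\<close>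
        have "(y, u) \<in> Es N" using wf edge(1) unfolding wf_inst_def by blast
        then have "is_border N (part N y) y"
          using edge False unfolding is_border_def in_SG_iff by auto
        then have "Edist N (part N y) \<le> ?x'" using far by (meson Edist_le order_trans)
        moreover have "geps N s < Edist N (part N y)"
          using dknn_invD(4)[OF inv] that unfolding bounds_valid_def by blast
        ultimately show ?thesis by simp
      qed
      then show ?thesis by (rule settled_if_covered[OF quiet covered])
    qed
  qed
qed

lemma settled_along_walk:
  assumes wf: "wf_inst N" and euclid: "\<forall>u v. (u, v) \<in> Es N \<longrightarrow> wt N u v \<ge> norm (vpos N u - vpos N v)"
    and inv: "dknn_inv N s F" and quiet: "buffer_empty s"
  shows "is_walk (Es N) xs \<Longrightarrow> hd xs = vq N \<Longrightarrow> set xs \<subseteq> Vs N \<Longrightarrow>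
    settled N s F (last xs) (walk_len (wt N) xs)"
proof (induction xs rule: rev_induct)
  case Nil
  then show ?case by simp
next
  case (snoc y xs)
  show ?case
  proof (cases "xs = []")
    case True
    have "covered N s F (vq N) 0" using dknn_invD(6)[OF inv] unfolding tables_covered_def by simp
    moreover have "part N (vq N) \<notin> pruned s"
      using dknn_invD(4)[OF inv] unfolding bounds_valid_def by blast
    ultimately have "settled N s F (vq N) 0" by (intro settled_if_covered[OF quiet]) simp_all
    then show ?thesis using True snoc(3) by (simp add: zero_ereal_def)
  next
    case False
    have walk: "is_walk (Es N) xs" "(last xs, y) \<in> Es N" using snoc(2) is_walk_snoc[OF False] by auto
    have "norm (vpos N (hd (xs @ [y])) - vpos N (last (xs @ [y]))) \<le> walk_len (wt N) (xs @ [y])"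
      using euclid by (intro norm_le_walk_len[OF snoc(2)]) auto
    then have "ereal (norm (vpos N (vq N) - vpos N y))
        \<le> ereal (walk_len (wt N) xs) + ereal (wt N (last xs) y)"
      using snoc(3) False by (simp add: walk_len_snoc)
    moreover have "settled N s F (last xs) (walk_len (wt N) xs)"
      using snoc False walk by (intro snoc.IH) auto
    ultimately have "settled N s F y (ereal (walk_len (wt N) xs) + ereal (wt N (last xs) y))"
      using snoc(4) False walk(2) by (intro settled_edge[OF wf inv quiet]) auto
    then show ?thesis using False by (simp add: walk_len_snoc)
  qed
qed

lemma min_rep_geps_le_SD_obj:
  assumes wf: "wf_inst N" and euclid: "\<forall>u v. (u, v) \<in> Es N \<longrightarrow> wt N u v \<ge> norm (vpos N u - vpos N v)"
    and inv: "dknn_inv N s F" and quiet: "buffer_empty s" and ob: "ob \<in> Obj N"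
  shows "min (rep s ob) (geps N s) \<le> SD_obj N ob"
proof -
  let ?v = "vloc N ob"
  let ?p = "part N ?v"
  have rem: "0 \<le> rem N ob" and v: "?v \<in> Vs N" using wf ob unfolding wf_inst_def by auto
  have "min (rep s ob) (geps N s) \<le> SD N (vq N) ?v + ereal (rem N ob)"
    unfolding SD_def
  proof (rule le_sp_dist_add[OF wf_inst_wt_nonneg[OF wf]])
    show "0 \<le> ereal (rem N ob)" using rem by simp
    fix xs assume xs: "is_walk (Es N) xs" "hd xs = vq N" "last xs = ?v" "set xs \<subseteq> Vs N"
    let ?len = "ereal (walk_len (wt N) xs)"
    have len_le: "?len \<le> ?len + ereal (rem N ob)" using rem by simp
    consider "geps N s \<le> ?len"
      | e d where "?p \<notin> pruned s" "(e, d) \<in> F ?p" "d + dsub N ?p e ?v \<le> ?len"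
      using settled_along_walk[OF wf euclid inv quiet xs(1,2,4)] unfolding xs(3) settled_def by blast
    then show "min (rep s ob) (geps N s) \<le> ?len + ereal (rem N ob)"
    proof cases
      case 1
      then show ?thesis by (intro min.coboundedI2 order_trans[OF _ len_le])
    next
      case 2
      have live: "?v \<in> live_set N ?p" using v ob unfolding live_set_def in_SG_iff by auto
      then have "Dt s ?p ?v \<le> ?len"
        using dknn_invD(5)[OF inv] 2(2,3) unfolding finished_propagated_def propagated_def
        by (meson DiffI empty_iff order_trans)
      moreover have "\<not> live_pending N s ?p ?v"
        using quiet unfolding buffer_empty_def live_pending_def by simp
      then have "min (rep s ob) (geps N s) \<le> Dt s ?p ?v + ereal (rem N ob)"
        using dknn_invD(7)[OF inv] 2(1) ob v unfolding live_reported_def in_SG_iff by blast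
      ultimately show ?thesis by (meson add_right_mono order_trans)
    qed
  qed
  then show ?thesis unfolding SD_obj_def .
qed

lemma SD_obj_le_rep: "reps_sound N s \<Longrightarrow> SD_obj N ob \<le> rep s ob"
  unfolding reps_sound_def rep_def by (auto intro: Inf_greatest)

lemma SD_obj_less_infinity:
  assumes "wf_inst N" and "connected_graph N" and "ob \<in> Obj N"
  shows "SD_obj N ob < \<infinity>"
proof -
  have "vq N \<in> Vs N" "vloc N ob \<in> Vs N" using assms(1,3) unfolding wf_inst_def by auto
  then obtain xs where "is_walk (Es N) xs" "hd xs = vq N" "last xs = vloc N ob" "set xs \<subseteq> Vs N"
    using assms(2) unfolding connected_graph_def by blast
  then have "SD N (vq N) (vloc N ob) \<le> ereal (walk_len (wt N) xs)"
    unfolding SD_def by (rule sp_dist_le_walk_len)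
  then show ?thesis unfolding SD_obj_def by auto
qed

lemma k_smallest_reports_exact:
  fixes r t :: "'a \<Rightarrow> ereal"
  assumes "finite A" and "P \<subseteq> A" and "0 < k" "k < card A"
    and unreported: "\<And>x. x \<notin> P \<Longrightarrow> r x = \<infinity>"
    and sound: "\<And>x. t x \<le> r x"
    and complete: "\<And>x. x \<in> A \<Longrightarrow> min (r x) g \<le> t x"
    and finite_t: "\<And>x. x \<in> A \<Longrightarrow> t x < \<infinity>"
    and g_top: "card P < k \<Longrightarrow> g = \<infinity>"
    and g_kth: "k \<le> card P \<Longrightarrow> k \<le> card {x \<in> P. r x \<le> g}"
    and R: "R \<subseteq> P" "card R = min k (card P)" "\<forall>x \<in> R. \<forall>y \<in> P - R. r x \<le> r y"
  shows "card R = k \<and> R \<subseteq> A \<and> (\<forall>x \<in> R. \<forall>y \<in> A - R. t x \<le> t y)"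
proof -
  have finP: "finite P" using assms(1,2) finite_subset by blast
  have "k \<le> card P"
  proof (rule ccontr)
    assume "\<not> k \<le> card P"
    then have "r x \<noteq> \<infinity>" if "x \<in> A" for x
      using complete[OF that] finite_t[OF that] g_top by (auto simp: min_def split: if_splits)
    then have "A \<subseteq> P" using unreported by blast
    then have "card A \<le> card P" by (rule card_mono[OF finP])
    then show False using \<open>\<not> k \<le> card P\<close> \<open>k < card A\<close> by simp
  qed
  then have card_R: "card R = k" using R(2) by simp
  have below_g: "r x \<le> g" if "x \<in> R" for x
  proof (rule ccontr)
    assume "\<not> r x \<le> g"
    have "y \<in> R - {x}" if "y \<in> P" "r y \<le> g" for y
    proof -
      have "r x \<le> r y" if "y \<notin> R" using R(3) \<open>x \<in> R\<close> \<open>y \<in> P\<close> that by blast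
      then show ?thesis using \<open>\<not> r x \<le> g\<close> \<open>r y \<le> g\<close> by (auto dest: order_trans)
    qed
    then have "{y \<in> P. r y \<le> g} \<subseteq> R - {x}" by blast
    then have "card {y \<in> P. r y \<le> g} \<le> k - 1"
      using card_mono[of "R - {x}"] finP R(1) that card_R by (simp add: finite_subset)
    then show False using g_kth \<open>k \<le> card P\<close> \<open>0 < k\<close> by fastforce
  qed
  have "t x \<le> t y" if "x \<in> R" "y \<in> A - R" for x y
  proof -
    have "r x \<le> r y" using R(3) that unreported by (cases "y \<in> P") auto
    then have "r x \<le> min (r y) g" using below_g[OF that(1)] by simp
    then show ?thesis using sound[of x] complete[of y] that by (meson DiffD1 order_trans)
  qed
  then show ?thesis using card_R R(1) assms(2) by blast
qed

theorem theorem2: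
  fixes N :: "('v, 'p, 'o) dknn_inst" and s :: "('v, 'p, 'o) dstate" and R :: "'o set"
  assumes wf: "wf_inst N"
    and conn: "connected_graph N"
    and euclid: "\<forall>u v. (u, v) \<in> Es N \<longrightarrow> wt N u v \<ge> norm (vpos N u - vpos N v)"
    and many: "card (Obj N) > kq N"
    and run: "reachable N s"
    and empty: "buffer_empty s"
    and res: "is_result N s R"
  shows "card R = kq N \<and> R \<subseteq> Obj N \<and>
         (\<forall>ob \<in> R. \<forall>ob' \<in> Obj N - R. SD_obj N ob \<le> SD_obj N ob')"
proof -
  have reported: "rep_objs s \<subseteq> Obj N" by (rule reachable_rep_objs_subset[OF run])
  have fin: "finite (Obj N)" using wf unfolding wf_inst_def by simp
  then have fin_reported: "finite (rep_objs s)" using reported finite_subset by blast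
  show ?thesis
  proof (cases "kq N = 0")
    case True
    then show ?thesis
      using res fin_reported unfolding is_result_def by (auto dest: finite_subset)
  next
    case False
    then obtain F where inv: "dknn_inv N s F" using reachable_dknn_inv[OF wf _ run] by auto
    show ?thesis
    proof (rule k_smallest_reports_exact[OF fin reported _ many rep_unreported])
      show "SD_obj N ob \<le> rep s ob" for ob by (rule SD_obj_le_rep[OF dknn_invD(3)[OF inv]])
      show "min (rep s ob) (geps N s) \<le> SD_obj N ob" if "ob \<in> Obj N" for ob
        by (rule min_rep_geps_le_SD_obj[OF wf euclid inv empty that])
      show "kq N \<le> card {ob \<in> rep_objs s. rep s ob \<le> geps N s}" if "kq N \<le> card (rep_objs s)"
        using geps_le_iff[OF fin_reported _ that, of "geps N s"] False by simp
    qed (use False res SD_obj_less_infinity[OF wf conn] in \<open>auto simp: geps_def is_result_def\<close>)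
  qed
qed

end
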